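(* If $G$ is an infinite graph of minimum degree $\delta(G)\ge 4$, then $G$ admits a majority $3$-edge-coloring.
   Context: Degrees may be infinite cardinals. A majority $3$-edge-coloring is a map $c:E(G)\to\{1,2,3\}$ such that for every vertex $v$ and every color $\alpha$, the cardinality of the set of edges incident to $v$ colored $\alpha$ is at most the cardinality of the set of edges incident to $v$ not colored $\alpha$. *)

theory Defs
  imports Main "HOL-Library.Equipollence"
begin

definition graph :: "'a set \<Rightarrow> 'a set set \<Rightarrow> bool" where
  "graph V E \<longleftrightarrow> (\<forall>e\<in>E. e \<subseteq> V \<and> card e = 2)"

definition incident :: "'a set set \<Rightarrow> 'a \<Rightarrow> 'a set set" where
  "incident E v = {e \<in> E. v \<in> e}"

definition min_degree_ge :: "'a set \<Rightarrow> 'a set set \<Rightarrow> nat \<Rightarrow> bool" where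
  "min_degree_ge V E k \<longleftrightarrow> (\<forall>v\<in>V. {..<k} \<lesssim> incident E v)"

definition majority_3_edge_coloring :: "'a set \<Rightarrow> 'a set set \<Rightarrow> ('a set \<Rightarrow> nat) \<Rightarrow> bool" where
  "majority_3_edge_coloring V E c \<longleftrightarrow>
     (\<forall>e\<in>E. c e \<in> {1,2,3}) \<and>
     (\<forall>v\<in>V. \<forall>\<alpha>\<in>{1,2,3::nat}.
        {e \<in> incident E v. c e = \<alpha>} \<lesssim> {e \<in> incident E v. c e \<noteq> \<alpha>})"

end

theory Submission
  imports Defs "HOL-Analysis.Function_Topology"
begin

text \<open>
  Orient the graph so that at every vertex of finite degree the numbers of outgoing and incoming
  edges differ by at most one: for finitely many edges, merge two edges with a common end into one
  edge and induct; compactness passes to infinite graphs. Next split the outgoing and the incoming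
  edges at every vertex into blocks of two or three edges. Every edge lies in one out-block, at its
  tail, and in one in-block, at its head, so the blocks are the vertices of a bipartite multigraph
  of maximum degree 3. By Koenig's edge colouring theorem and compactness it has a proper
  3-edge-colouring, i.e. one in which every block is rainbow. Sending each edge to another edge of
  its block then injects every colour class at a vertex into its complement. Only singleton blocks
  escape this; they arise only when a vertex has a single outgoing or a single incoming edge, which
  by balance and minimum degree 4 happens only at vertices of infinite degree, and there the at most
  two exceptional edges do not matter.
\<close>

section \<open>Compactness for constraints on finitely many variables\<close>

lemma openin_product_topology_local:
  fixes X :: "'i \<Rightarrow> 'd topology"
  assumes "finite J" "J \<subseteq> I"
    and open_points: "\<And>i x. i \<in> J \<Longrightarrow> x \<in> topspace (X i) \<Longrightarrow> openin (X i) {x}"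
    and local: "\<And>f g. (\<And>i. i \<in> J \<Longrightarrow> f i = g i) \<Longrightarrow> P f \<longleftrightarrow> P g"
  shows "openin (product_topology X I) {f \<in> topspace (product_topology X I). P f}"
proof (subst openin_subopen, intro ballI)
  fix f assume f: "f \<in> {f \<in> topspace (product_topology X I). P f}"
  define S where "S i = (if i \<in> J then {f i} else topspace (X i))" for i
  have S_sub: "S i \<subseteq> topspace (X i)" if "i \<in> I" for i
    using f that by (auto simp: S_def PiE_iff)
  have "finite {i \<in> I. S i \<noteq> topspace (X i)}"
    by (rule finite_subset[OF _ \<open>finite J\<close>]) (auto simp: S_def)
  then have "openin (product_topology X I) (Pi\<^sub>E I S)"
    using S_sub open_points f \<open>J \<subseteq> I\<close> by (auto simp: openin_PiE_gen S_def PiE_iff)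
  moreover have "f \<in> Pi\<^sub>E I S" using f by (auto simp: S_def PiE_iff)
  moreover have "Pi\<^sub>E I S \<subseteq> {f \<in> topspace (product_topology X I). P f}"
  proof
    fix g assume g: "g \<in> Pi\<^sub>E I S"
    have "g i = f i" if "i \<in> J" for i
      using g that \<open>J \<subseteq> I\<close> by (auto simp: S_def PiE_iff dest!: bspec[of I _ i])
    then have "P g" using local f by blast
    moreover have "g \<in> topspace (product_topology X I)"
      using g S_sub by (auto simp: PiE_iff)
    ultimately show "g \<in> {f \<in> topspace (product_topology X I). P f}" by blast
  qed
  ultimately show "\<exists>U. openin (product_topology X I) U \<and> f \<in> U \<and>
      U \<subseteq> {f \<in> topspace (product_topology X I). P f}"
    by blast
qed

lemma closedin_product_discrete_local:
  fixes D :: "'i \<Rightarrow> 'd set" and I :: "'i set"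
  defines "X \<equiv> product_topology (\<lambda>i. discrete_topology (D i)) I"
  assumes "finite J" "J \<subseteq> I"
    and local: "\<And>f g. (\<And>i. i \<in> J \<Longrightarrow> f i = g i) \<Longrightarrow> P f \<longleftrightarrow> P g"
  shows "closedin X {f \<in> topspace X. P f}"
proof -
  have "openin X {f \<in> topspace X. \<not> P f}"
    unfolding X_def
  proof (rule openin_product_topology_local[OF assms(2,3)])
    show "(\<not> P f) \<longleftrightarrow> (\<not> P g)" if "\<And>i. i \<in> J \<Longrightarrow> f i = g i" for f g
      using local[OF that] by simp
  qed simp
  moreover have "topspace X - {f \<in> topspace X. P f} = {f \<in> topspace X. \<not> P f}" by blast
  ultimately show ?thesis by (simp add: closedin_def)
qed

theorem compactness_finite_domains:
  fixes I :: "'i set" and dom :: "'i \<Rightarrow> 'd set" and Cs :: "'c set"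
    and vars :: "'c \<Rightarrow> 'i set" and sat :: "'c \<Rightarrow> ('i \<Rightarrow> 'd) \<Rightarrow> bool"
  assumes finite_dom: "\<And>i. i \<in> I \<Longrightarrow> finite (dom i)"
    and vars: "\<And>\<gamma>. \<gamma> \<in> Cs \<Longrightarrow> finite (vars \<gamma>) \<and> vars \<gamma> \<subseteq> I"
    and local: "\<And>\<gamma> f g. \<gamma> \<in> Cs \<Longrightarrow> (\<And>i. i \<in> vars \<gamma> \<Longrightarrow> f i = g i) \<Longrightarrow> sat \<gamma> f \<longleftrightarrow> sat \<gamma> g"
    and finitely_satisfiable:
      "\<And>C. C \<subseteq> Cs \<Longrightarrow> finite C \<Longrightarrow> \<exists>f. (\<forall>i\<in>I. f i \<in> dom i) \<and> (\<forall>\<gamma>\<in>C. sat \<gamma> f)"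
  shows "\<exists>f. (\<forall>i\<in>I. f i \<in> dom i) \<and> (\<forall>\<gamma>\<in>Cs. sat \<gamma> f)"
proof (cases "Cs = {}")
  case True
  then show ?thesis using finitely_satisfiable[of "{}"] by simp
next
  case False
  define X where "X = product_topology (\<lambda>i. discrete_topology (dom i)) I"
  define K where "K \<gamma> = {f \<in> topspace X. sat \<gamma> f}" for \<gamma>
  have "compact_space X"
    using finite_dom by (simp add: X_def compact_space_product_topology compact_space_discrete_topology)
  moreover have "closedin X (K \<gamma>)" if "\<gamma> \<in> Cs" for \<gamma>
  proof -
    from vars[OF that] have "finite (vars \<gamma>)" "vars \<gamma> \<subseteq> I" by auto
    from closedin_product_discrete_local[where D = dom and P = "sat \<gamma>", OF this local[OF that]]
    show ?thesis
      by (simp add: X_def K_def)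
  qed
  moreover have "\<Inter>(K ` C) \<noteq> {}" if C: "C \<subseteq> Cs" "finite C" for C
  proof -
    obtain f where f: "\<forall>i\<in>I. f i \<in> dom i" "\<forall>\<gamma>\<in>C. sat \<gamma> f"
      using finitely_satisfiable[OF C] by blast
    have "restrict f I \<in> K \<gamma>" if "\<gamma> \<in> C" for \<gamma>
    proof -
      have "\<gamma> \<in> Cs" using that \<open>C \<subseteq> Cs\<close> by blast
      then have "sat \<gamma> f \<longleftrightarrow> sat \<gamma> (restrict f I)"
        by (rule local) (use vars[OF \<open>\<gamma> \<in> Cs\<close>] in auto)
      moreover have "restrict f I \<in> topspace X" using f(1) by (simp add: X_def)
      ultimately show ?thesis using f(2) that by (simp add: K_def)
    qed
    then show ?thesis by blast
  qed
  then have "\<Inter>\<F> \<noteq> {}" if "finite \<F>" "\<F> \<subseteq> K ` Cs" for \<F>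
    using finite_subset_image[OF that] by auto
  ultimately have "\<Inter>(K ` Cs) \<noteq> {}"
    using compact_space_fip[THEN iffD1, rule_format, of X "K ` Cs"] by blast
  then show ?thesis
    using False by (auto simp: K_def X_def PiE_iff)
qed

section \<open>Edge colourings of bipartite multigraphs\<close>

text \<open>A bipartite multigraph is given by its set of edges \<open>F\<close> and the maps \<open>l\<close> and \<open>r\<close>
  sending each edge to its left and to its right end.\<close>

definition proper_edge_coloring :: "'e set \<Rightarrow> ('e \<Rightarrow> 'l) \<Rightarrow> ('e \<Rightarrow> 'r) \<Rightarrow> ('e \<Rightarrow> 'c) \<Rightarrow> bool" where
  "proper_edge_coloring F l r c \<longleftrightarrow> (\<forall>f\<in>F. \<forall>g\<in>F. f \<noteq> g \<and> (l f = l g \<or> r f = r g) \<longrightarrow> c f \<noteq> c g)"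

inductive_set kempe_chain :: "'e set \<Rightarrow> ('e \<Rightarrow> 'l) \<Rightarrow> ('e \<Rightarrow> 'r) \<Rightarrow> ('e \<Rightarrow> 'c) \<Rightarrow> 'c \<Rightarrow> 'c \<Rightarrow> 'e \<Rightarrow> 'e set"
  for F l r c a b f0
where
  start: "f0 \<in> kempe_chain F l r c a b f0"
| left: "f \<in> kempe_chain F l r c a b f0 \<Longrightarrow> c f = a \<Longrightarrow> g \<in> F \<Longrightarrow> l g = l f \<Longrightarrow> c g = b \<Longrightarrow>
    g \<in> kempe_chain F l r c a b f0"
| right: "f \<in> kempe_chain F l r c a b f0 \<Longrightarrow> c f = b \<Longrightarrow> g \<in> F \<Longrightarrow> r g = r f \<Longrightarrow> c g = a \<Longrightarrow>
    g \<in> kempe_chain F l r c a b f0"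

context
  fixes F :: "'e set" and l :: "'e \<Rightarrow> 'l" and r :: "'e \<Rightarrow> 'r" and c :: "'e \<Rightarrow> 'c"
    and a b :: 'c and f0 :: 'e
  assumes proper: "proper_edge_coloring F l r c"
    and f0: "f0 \<in> F" "c f0 = a"
    and no_b_at_f0: "\<forall>g\<in>F. r g = r f0 \<longrightarrow> c g \<noteq> b"
begin

lemma kempe_colors_distinct: "a \<noteq> b"
  using f0 no_b_at_f0 by auto

lemma kempe_chain_colors:
  assumes "f \<in> kempe_chain F l r c a b f0"
  shows "f \<in> F" "c f = a \<or> c f = b"
  using assms f0 by (induction rule: kempe_chain.induct) auto

lemma kempe_chain_b_pred:
  assumes "f \<in> kempe_chain F l r c a b f0" "c f = b"
  shows "\<exists>f'\<in>kempe_chain F l r c a b f0. c f' = a \<and> l f' = l f"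
  using assms(1)
proof cases
  case (left f')
  then show ?thesis by metis
qed (use assms(2) f0 kempe_colors_distinct in simp_all)

lemma kempe_chain_a_pred:
  assumes "f \<in> kempe_chain F l r c a b f0" "c f = a" "f \<noteq> f0"
  shows "\<exists>f'\<in>kempe_chain F l r c a b f0. c f' = b \<and> r f' = r f"
  using assms(1)
proof cases
  case (right f')
  then show ?thesis by metis
qed (use assms(2,3) kempe_colors_distinct in simp_all)

lemma kempe_chain_closed:
  assumes f: "f \<in> kempe_chain F l r c a b f0" and g: "g \<in> F" "g \<noteq> f" "l g = l f \<or> r g = r f"
    and cg: "c g = a \<or> c g = b"
  shows "g \<in> kempe_chain F l r c a b f0"
proof -
  have unique: "h = g" if "h \<in> F" "l h = l g \<or> r h = r g" "c h = c g" for h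
    using proper that g(1) unfolding proper_edge_coloring_def by metis
  have "c f \<noteq> c g"
    using proper kempe_chain_colors(1)[OF f] g unfolding proper_edge_coloring_def by metis
  consider "c f = a" "l g = l f" | "c f = b" "r g = r f" | "c f = a" "r g = r f" | "c f = b" "l g = l f"
    using kempe_chain_colors(2)[OF f] g(3) by blast
  then show ?thesis
  proof cases
    case 1
    then show ?thesis using f g(1) cg \<open>c f \<noteq> c g\<close> by (auto intro: kempe_chain.left)
  next
    case 2
    then show ?thesis using f g(1) cg \<open>c f \<noteq> c g\<close> by (auto intro: kempe_chain.right)
  next
    case 3
    then have "c g = b" "f \<noteq> f0" using cg \<open>c f \<noteq> c g\<close> g(1) no_b_at_f0 by auto
    with kempe_chain_a_pred[OF f] 3 obtain f' where "f' \<in> kempe_chain F l r c a b f0" "c f' = b" "r f' = r g"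
      by auto
    with unique kempe_chain_colors(1) \<open>c g = b\<close> show ?thesis by metis
  next
    case 4
    then have "c g = a" using cg \<open>c f \<noteq> c g\<close> by simp
    with kempe_chain_b_pred[OF f] 4 obtain f' where "f' \<in> kempe_chain F l r c a b f0" "c f' = a" "l f' = l g"
      by auto
    with unique kempe_chain_colors(1) \<open>c g = a\<close> show ?thesis by metis
  qed
qed

lemma kempe_chain_avoids:
  assumes no_a_at_x: "\<forall>g\<in>F. l g = x \<longrightarrow> c g \<noteq> a"
    and "f \<in> kempe_chain F l r c a b f0"
  shows "l f \<noteq> x"
  using assms(2) by (induction rule: kempe_chain.induct) (use f0 no_a_at_x in auto)

lemma kempe_swap_proper:
  "proper_edge_coloring F l r (\<lambda>f. if f \<in> kempe_chain F l r c a b f0 then (if c f = a then b else a) else c f)"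
  (is "proper_edge_coloring F l r ?c'")
  unfolding proper_edge_coloring_def
proof (intro ballI impI)
  let ?K = "kempe_chain F l r c a b f0"
  fix f g assume f: "f \<in> F" and g: "g \<in> F" and fg: "f \<noteq> g \<and> (l f = l g \<or> r f = r g)"
  have "c f \<noteq> c g" using proper f g fg unfolding proper_edge_coloring_def by blast
  have outside: "c y \<noteq> a \<and> c y \<noteq> b"
    if "x \<in> ?K" "y \<in> F" "y \<notin> ?K" "y \<noteq> x" "l y = l x \<or> r y = r x" for x y
    using kempe_chain_closed[OF that(1,2,4,5)] that(3) by blast
  consider "f \<in> ?K" "g \<in> ?K" | "f \<in> ?K" "g \<notin> ?K" | "f \<notin> ?K" "g \<in> ?K" | "f \<notin> ?K" "g \<notin> ?K"
    by blast
  then show "?c' f \<noteq> ?c' g"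
  proof cases
    case 1
    then show ?thesis
      using kempe_chain_colors(2)[of f] kempe_chain_colors(2)[of g] \<open>c f \<noteq> c g\<close> kempe_colors_distinct
      by auto
  next
    case 2
    then show ?thesis using outside[OF 2(1) g 2(2)] fg by auto
  next
    case 3
    then show ?thesis using outside[OF 3(2) f 3(1)] fg by auto
  qed (use \<open>c f \<noteq> c g\<close> in simp)
qed

lemma kempe_swap:
  assumes no_a_at_x: "\<forall>g\<in>F. l g = x \<longrightarrow> c g \<noteq> a"
  shows "\<exists>c'. proper_edge_coloring F l r c' \<and> (\<forall>f\<in>F. c' f \<in> {c f, a, b}) \<and>
    (\<forall>f\<in>F. l f = x \<longrightarrow> c' f \<noteq> a) \<and> (\<forall>f\<in>F. r f = r f0 \<longrightarrow> c' f \<noteq> a)"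
proof -
  let ?K = "kempe_chain F l r c a b f0"
  define c' where "c' f = (if f \<in> ?K then (if c f = a then b else a) else c f)" for f
  have "proper_edge_coloring F l r c'"
    unfolding c'_def by (rule kempe_swap_proper)
  moreover have "c' f \<noteq> a" if "f \<in> F" "l f = x" for f
  proof -
    have "f \<notin> ?K" using kempe_chain_avoids[OF no_a_at_x] that(2) by blast
    then show ?thesis using no_a_at_x that by (simp add: c'_def)
  qed
  moreover have "c' f \<noteq> a" if "f \<in> F" "r f = r f0" for f
  proof (cases "f \<in> ?K")
    case True
    then have "c f = a" using kempe_chain_colors(2)[OF True] no_b_at_f0 that by blast
    then show ?thesis using True kempe_colors_distinct by (simp add: c'_def)
  next
    case False
    then have "f \<noteq> f0" by (auto intro: kempe_chain.start)
    then have "c f \<noteq> a"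
      using proper that f0 unfolding proper_edge_coloring_def by metis
    then show ?thesis using False by (simp add: c'_def)
  qed
  moreover have "\<forall>f\<in>F. c' f \<in> {c f, a, b}" by (simp add: c'_def)
  ultimately show ?thesis by blast
qed

end

lemma exists_unused_color:
  fixes c :: "'e \<Rightarrow> nat"
  assumes "finite S" "card S < k"
  shows "\<exists>a<k. \<forall>s\<in>S. c s \<noteq> a"
proof -
  have "card (c ` S) < card {..<k}" using assms card_image_le[of S c] by simp
  then have "\<not> {..<k} \<subseteq> c ` S" using assms(1) by (meson card_mono finite_imageI not_le)
  then show ?thesis by auto
qed

lemma proper_edge_coloring_common_free_color:
  fixes c :: "'e \<Rightarrow> nat"
  assumes proper: "proper_edge_coloring F l r c" and colors: "\<forall>f\<in>F. c f < k"
    and "a < k" "b < k" and a: "\<forall>f\<in>F. l f = x \<longrightarrow> c f \<noteq> a" and b: "\<forall>f\<in>F. r f = y \<longrightarrow> c f \<noteq> b"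
  shows "\<exists>c'. proper_edge_coloring F l r c' \<and> (\<forall>f\<in>F. c' f < k) \<and>
    (\<forall>f\<in>F. l f = x \<longrightarrow> c' f \<noteq> a) \<and> (\<forall>f\<in>F. r f = y \<longrightarrow> c' f \<noteq> a)"
proof (cases "\<exists>f0\<in>F. r f0 = y \<and> c f0 = a")
  case True
  then obtain f0 where f0: "f0 \<in> F" "r f0 = y" "c f0 = a" by auto
  have "\<forall>g\<in>F. r g = r f0 \<longrightarrow> c g \<noteq> b" using b f0(2) by simp
  from kempe_swap[OF proper f0(1,3) this a] f0(2)
  obtain c' where c': "proper_edge_coloring F l r c'" "\<forall>f\<in>F. c' f \<in> {c f, a, b}"
    "\<forall>f\<in>F. l f = x \<longrightarrow> c' f \<noteq> a" "\<forall>f\<in>F. r f = y \<longrightarrow> c' f \<noteq> a"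
    by auto
  moreover have "\<forall>f\<in>F. c' f < k" using c'(2) colors \<open>a < k\<close> \<open>b < k\<close> by auto
  ultimately show ?thesis by blast
next
  case False
  then show ?thesis using proper colors a by blast
qed

theorem bipartite_edge_coloring_finite:
  fixes F :: "'e set" and l :: "'e \<Rightarrow> 'l" and r :: "'e \<Rightarrow> 'r"
  assumes "finite F" "\<And>x. card {f\<in>F. l f = x} \<le> k" "\<And>y. card {f\<in>F. r f = y} \<le> k"
  shows "\<exists>c. (\<forall>f\<in>F. c f < k) \<and> proper_edge_coloring F l r c"
  using assms
proof (induction F rule: finite_induct)
  case empty
  then show ?case by (simp add: proper_edge_coloring_def)
next
  case (insert e F)
  have fiber: "{f\<in>insert e F. p f = p e} = insert e {f\<in>F. p f = p e}" for p :: "'e \<Rightarrow> 'z"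
    by auto
  have mono: "card {f\<in>F. p f = z} \<le> card {f\<in>insert e F. p f = z}" for p :: "'e \<Rightarrow> 'z" and z
    using insert.hyps(1) by (intro card_mono) auto
  have "card {f\<in>F. l f = x} \<le> k" for x
    using mono[of l x] insert.prems(1)[of x] by (rule order_trans)
  moreover have "card {f\<in>F. r f = y} \<le> k" for y
    using mono[of r y] insert.prems(2)[of y] by (rule order_trans)
  ultimately obtain c where c: "\<forall>f\<in>F. c f < k" "proper_edge_coloring F l r c"
    using insert.IH by blast
  have "card {f\<in>F. l f = l e} < k" "card {f\<in>F. r f = r e} < k"
    using insert.prems(1)[of "l e"] insert.prems(2)[of "r e"] insert.hyps fiber[of l] fiber[of r]
    by simp_all
  then obtain a b where "a < k" "b < k"
    and "\<forall>f\<in>F. l f = l e \<longrightarrow> c f \<noteq> a" "\<forall>f\<in>F. r f = r e \<longrightarrow> c f \<noteq> b"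
    using exists_unused_color[of "{f\<in>F. l f = l e}" k c] exists_unused_color[of "{f\<in>F. r f = r e}" k c]
      insert.hyps(1) by auto
  from proper_edge_coloring_common_free_color[OF c(2,1) this]
  obtain c' where c': "proper_edge_coloring F l r c'" "\<forall>f\<in>F. c' f < k"
    "\<forall>f\<in>F. l f = l e \<longrightarrow> c' f \<noteq> a" "\<forall>f\<in>F. r f = r e \<longrightarrow> c' f \<noteq> a"
    by blast
  then have "proper_edge_coloring (insert e F) l r (c'(e := a))"
    using insert.hyps(2) unfolding proper_edge_coloring_def by auto
  moreover have "\<forall>f\<in>insert e F. (c'(e := a)) f < k" using c'(2) \<open>a < k\<close> by simp
  ultimately show ?case by blast
qed


lemma bipartite_edge_coloring:
  fixes F :: "'e set" and l :: "'e \<Rightarrow> 'l" and r :: "'e \<Rightarrow> 'r"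
  assumes fin_l: "\<And>x. finite {f\<in>F. l f = x}" and deg_l: "\<And>x. card {f\<in>F. l f = x} \<le> k"
    and fin_r: "\<And>y. finite {f\<in>F. r f = y}" and deg_r: "\<And>y. card {f\<in>F. r f = y} \<le> k"
  shows "\<exists>c. (\<forall>f\<in>F. c f < k) \<and> proper_edge_coloring F l r c"
proof -
  define Cs where "Cs = {(f, g). f \<in> F \<and> g \<in> F \<and> f \<noteq> g \<and> (l f = l g \<or> r f = r g)}"
  have "\<exists>c. (\<forall>f\<in>F. c f \<in> {..<k}) \<and> (\<forall>\<gamma>\<in>Cs. c (fst \<gamma>) \<noteq> c (snd \<gamma>))"
  proof (rule compactness_finite_domains[where vars = "\<lambda>\<gamma>. {fst \<gamma>, snd \<gamma>}"])
    show "finite {fst \<gamma>, snd \<gamma>} \<and> {fst \<gamma>, snd \<gamma>} \<subseteq> F" if "\<gamma> \<in> Cs" for \<gamma>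
      using that by (auto simp: Cs_def)
  next
    fix C assume C: "C \<subseteq> Cs" "finite C"
    define F0 where "F0 = fst ` C \<union> snd ` C"
    have "finite F0" "F0 \<subseteq> F" using C by (auto simp: F0_def Cs_def)
    have mono: "card {f\<in>F0. p f = z} \<le> card {f\<in>F. p f = z}"
      if "finite {f\<in>F. p f = z}" for p :: "'e \<Rightarrow> 'z" and z
      using that \<open>F0 \<subseteq> F\<close> by (intro card_mono) auto
    have "card {f\<in>F0. l f = x} \<le> k" "card {f\<in>F0. r f = y} \<le> k" for x y
      using order_trans[OF mono[OF fin_l] deg_l] order_trans[OF mono[OF fin_r] deg_r] by blast+
    then obtain c0 where c0: "\<forall>f\<in>F0. c0 f < k" "proper_edge_coloring F0 l r c0"
      using bipartite_edge_coloring_finite[OF \<open>finite F0\<close>] by blast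
    define c where "c f = (if f \<in> F0 then c0 f else 0)" for f
    have "c f < k" if "f \<in> F" for f
    proof -
      have "0 < card {g\<in>F. l g = l f}" using fin_l that by (auto simp: card_gt_0_iff)
      then show ?thesis using deg_l[of "l f"] c0(1) by (auto simp: c_def)
    qed
    moreover have "c (fst \<gamma>) \<noteq> c (snd \<gamma>)" if "\<gamma> \<in> C" for \<gamma>
    proof -
      obtain f g where \<gamma>: "\<gamma> = (f, g)" by fastforce
      have "f \<in> F0" "g \<in> F0" using that \<gamma> by (force simp: F0_def)+
      moreover have "f \<noteq> g \<and> (l f = l g \<or> r f = r g)" using that \<gamma> C(1) by (auto simp: Cs_def)
      ultimately have "c0 f \<noteq> c0 g" using c0(2) unfolding proper_edge_coloring_def by blast
      then show ?thesis using \<open>f \<in> F0\<close> \<open>g \<in> F0\<close> by (simp add: \<gamma> c_def)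
    qed
    ultimately show "\<exists>c. (\<forall>f\<in>F. c f \<in> {..<k}) \<and> (\<forall>\<gamma>\<in>C. c (fst \<gamma>) \<noteq> c (snd \<gamma>))"
      by (intro exI[of _ c]) simp
  qed auto
  then show ?thesis by (auto simp: proper_edge_coloring_def Cs_def)
qed

section \<open>Balanced orientations\<close>

definition flow :: "'a \<times> 'a \<Rightarrow> 'a \<Rightarrow> int" where
  "flow p v = of_bool (fst p = v) - of_bool (snd p = v)"

lemma flow_trans: "flow (u, v) x + flow (v, w) x = flow (u, w) x"
  by (simp add: flow_def)

lemma sum_flow_disjoint_pairs:
  assumes "finite I"
    and disjoint: "\<And>i j. i \<in> I \<Longrightarrow> j \<in> I \<Longrightarrow> i \<noteq> j \<Longrightarrow> {fst (p i), snd (p i)} \<inter> {fst (p j), snd (p j)} = {}"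
  shows "\<bar>\<Sum>i\<in>I. flow (p i) x\<bar> \<le> 1"
proof (cases "\<exists>i\<in>I. x \<in> {fst (p i), snd (p i)}")
  case True
  then obtain i where i: "i \<in> I" "x \<in> {fst (p i), snd (p i)}" by blast
  have "(\<Sum>j\<in>I - {i}. flow (p j) x) = 0"
    using disjoint[OF i(1)] i(2) by (intro sum.neutral) (fastforce simp: flow_def)
  then have "(\<Sum>j\<in>I. flow (p j) x) = flow (p i) x"
    using sum.remove[OF \<open>finite I\<close> i(1), of "\<lambda>j. flow (p j) x"] by simp
  then show ?thesis by (simp add: flow_def)
next
  case False
  then have "(\<Sum>j\<in>I. flow (p j) x) = 0" by (intro sum.neutral) (auto simp: flow_def)
  then show ?thesis by simp
qed

text \<open>Two pairs sharing the vertex \<open>v\<close> may be replaced by the single pair joining their other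
  ends \<open>u\<close> and \<open>w\<close>: orienting it as \<open>(u, w)\<close> or \<open>(w, u)\<close> orients the two original pairs as a
  path through \<open>v\<close>, which leaves every sum of flows unchanged.\<close>

lemma reorientation_split_merged_pair:
  assumes "finite I" "i \<in> I" "j \<in> I" "i \<noteq> j"
    and u: "p i = (v, u) \<or> p i = (u, v)" and w: "p j = (v, w) \<or> p j = (w, v)"
    and q': "\<forall>l\<in>I - {j}. q' l = (p(i := (u, w))) l \<or> q' l = prod.swap ((p(i := (u, w))) l)"
  shows "\<exists>q. (\<forall>l\<in>I. q l = p l \<or> q l = prod.swap (p l)) \<and>
    (\<forall>x. (\<Sum>l\<in>I. flow (q l) x) = (\<Sum>l\<in>I - {j}. flow (q' l) x))"
proof -
  have "i \<in> I - {j}" using assms(2,4) by simp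
  from bspec[OF q' this] have q'i: "q' i = (u, w) \<or> q' i = (w, u)" by simp
  define q where "q = q'(i := if q' i = (u, w) then (u, v) else (v, u),
                        j := if q' i = (u, w) then (v, w) else (w, v))"
  have qi: "q i \<in> {(u, v), (v, u)}" and qj: "q j \<in> {(v, w), (w, v)}"
    using assms(4) by (simp_all add: q_def)
  have "q l = p l \<or> q l = prod.swap (p l)" if l: "l \<in> I" for l
  proof -
    consider "l = i" | "l = j" | "l \<in> I - {j} - {i}"
      using l by auto
    then show ?thesis
    proof cases
      case 3
      then have "q l = q' l" "(p(i := (u, w))) l = p l" by (auto simp: q_def)
      with bspec[OF q' DiffD1[OF 3]] show ?thesis by simp
    qed (use qi u qj w in auto)
  qed
  moreover have "(\<Sum>l\<in>I. flow (q l) x) = (\<Sum>l\<in>I - {j}. flow (q' l) x)" for x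
  proof -
    have "flow (q i) x + flow (q j) x = flow (q' i) x"
    proof (cases "q' i = (u, w)")
      case True
      then show ?thesis using assms(4) by (simp add: q_def flow_trans)
    next
      case False
      then have "q' i = (w, u)" using q'i by simp
      with False show ?thesis using assms(4) flow_trans[of w v x u] by (simp add: q_def)
    qed
    moreover have "(\<Sum>l\<in>I - {j} - {i}. flow (q l) x) = (\<Sum>l\<in>I - {j} - {i}. flow (q' l) x)"
      by (intro sum.cong) (auto simp: q_def)
    moreover have "(\<Sum>l\<in>I. flow (q l) x) = flow (q j) x + flow (q i) x + (\<Sum>l\<in>I - {j} - {i}. flow (q l) x)"
      using sum.remove[OF assms(1,3), of "\<lambda>l. flow (q l) x"]
        sum.remove[OF _ \<open>i \<in> I - {j}\<close>, of "\<lambda>l. flow (q l) x"] assms(1)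
      by simp
    moreover have "(\<Sum>l\<in>I - {j}. flow (q' l) x) = flow (q' i) x + (\<Sum>l\<in>I - {j} - {i}. flow (q' l) x)"
      using sum.remove[OF _ \<open>i \<in> I - {j}\<close>] assms(1) by simp
    ultimately show ?thesis by simp
  qed
  ultimately show ?thesis by blast
qed

lemma balanced_orientation_finite:
  fixes p :: "'i \<Rightarrow> 'a \<times> 'a"
  assumes "finite I"
  shows "\<exists>q. (\<forall>i\<in>I. q i = p i \<or> q i = prod.swap (p i)) \<and> (\<forall>x. \<bar>\<Sum>i\<in>I. flow (q i) x\<bar> \<le> 1)"
  using assms
proof (induction "card I" arbitrary: I p rule: less_induct)
  case less
  show ?case
  proof (cases "\<exists>i\<in>I. \<exists>j\<in>I. i \<noteq> j \<and> {fst (p i), snd (p i)} \<inter> {fst (p j), snd (p j)} \<noteq> {}")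
    case True
    then obtain i j v where ij: "i \<in> I" "j \<in> I" "i \<noteq> j"
      and v: "v \<in> {fst (p i), snd (p i)}" "v \<in> {fst (p j), snd (p j)}"
      by blast
    obtain u w where u: "p i = (v, u) \<or> p i = (u, v)" and w: "p j = (v, w) \<or> p j = (w, v)"
      using v by (cases "p i"; cases "p j") auto
    have "card (I - {j}) < card I" "finite (I - {j})"
      using card_Diff1_less[OF less.prems ij(2)] less.prems by simp_all
    from less.hyps[OF this, of "p(i := (u, w))"]
    obtain q' where q': "\<forall>l\<in>I - {j}. q' l = (p(i := (u, w))) l \<or> q' l = prod.swap ((p(i := (u, w))) l)"
      and balanced': "\<forall>x. \<bar>\<Sum>l\<in>I - {j}. flow (q' l) x\<bar> \<le> 1"
      by blast
    from reorientation_split_merged_pair[OF less.prems ij u w q'] balanced' show ?thesis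
      by metis
  next
    case False
    then have "\<bar>\<Sum>i\<in>I. flow (p i) x\<bar> \<le> 1" for x
      using less.prems by (intro sum_flow_disjoint_pairs) auto
    then show ?thesis by blast
  qed
qed


definition other_end :: "'a set \<Rightarrow> 'a \<Rightarrow> 'a" where
  "other_end e x = the_elem (e - {x})"

lemma other_end:
  assumes "card e = 2" "x \<in> e"
  shows "{x, other_end e x} = e" "other_end e x \<noteq> x"
proof -
  obtain y where "e = {x, y}" "x \<noteq> y"
    using assms by (auto simp: card_2_iff doubleton_eq_iff)
  then show "{x, other_end e x} = e" "other_end e x \<noteq> x"
    by (simp_all add: other_end_def insert_Diff_if)
qed

text \<open>An orientation of \<open>E\<close> is given by the tail \<open>t e \<in> e\<close> of every edge \<open>e\<close>.\<close>

definition out_edges :: "'a set set \<Rightarrow> ('a set \<Rightarrow> 'a) \<Rightarrow> 'a \<Rightarrow> 'a set set" where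
  "out_edges E t v = {e \<in> incident E v. t e = v}"

definition in_edges :: "'a set set \<Rightarrow> ('a set \<Rightarrow> 'a) \<Rightarrow> 'a \<Rightarrow> 'a set set" where
  "in_edges E t v = {e \<in> incident E v. t e \<noteq> v}"

definition balanced :: "'a set set \<Rightarrow> ('a set \<Rightarrow> 'a) \<Rightarrow> bool" where
  "balanced E t \<longleftrightarrow> (\<forall>v. finite (incident E v) \<longrightarrow>
     \<bar>int (card (out_edges E t v)) - int (card (in_edges E t v))\<bar> \<le> 1)"

lemma card_out_edges_minus_in_edges:
  assumes "finite F" "F \<subseteq> E" "incident E v \<subseteq> F"
    and q: "\<And>e. e \<in> F \<Longrightarrow> {fst (q e), snd (q e)} = e \<and> fst (q e) \<noteq> snd (q e)"
    and t: "\<And>e. e \<in> F \<Longrightarrow> t e = fst (q e)"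
  shows "int (card (out_edges E t v)) - int (card (in_edges E t v)) = (\<Sum>e\<in>F. flow (q e) v)"
proof -
  have "finite (incident E v)" using assms(1,3) by (rule finite_subset[rotated])
  have "flow (q e) v = 0" if "e \<in> F - incident E v" for e
  proof -
    have "v \<notin> e" using that \<open>F \<subseteq> E\<close> by (auto simp: incident_def)
    moreover have "fst (q e) \<in> e" "snd (q e) \<in> e" using q[of e] that by blast+
    ultimately show ?thesis by (auto simp: flow_def)
  qed
  then have "(\<Sum>e\<in>F. flow (q e) v) = (\<Sum>e\<in>incident E v. flow (q e) v)"
    by (intro sum.mono_neutral_right[OF assms(1,3)]) blast
  also have "\<dots> = (\<Sum>e\<in>incident E v. if t e = v then 1 else -1)"
  proof (rule sum.cong)
    fix e assume "e \<in> incident E v"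
    then have "e \<in> F" "v \<in> e" using assms(3) by (auto simp: incident_def)
    then have "v = fst (q e) \<or> v = snd (q e)" "fst (q e) \<noteq> snd (q e)" using q[of e] by blast+
    then show "flow (q e) v = (if t e = v then 1 else -1)"
      using t[OF \<open>e \<in> F\<close>] by (auto simp: flow_def)
  qed simp
  also have "\<dots> = int (card (out_edges E t v)) - int (card (in_edges E t v))"
    using \<open>finite (incident E v)\<close>
    by (simp add: sum.If_cases Int_def conj_commute out_edges_def in_edges_def)
  finally show ?thesis by simp
qed

lemma balanced_orientation_finite_subset:
  fixes E :: "'a set set"
  assumes two: "\<And>e. e \<in> E \<Longrightarrow> card e = 2" and "finite F" "F \<subseteq> E"
  shows "\<exists>t. (\<forall>e\<in>E. t e \<in> e) \<and> (\<forall>v. incident E v \<subseteq> F \<longrightarrow>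
    \<bar>int (card (out_edges E t v)) - int (card (in_edges E t v))\<bar> \<le> 1)"
proof -
  define p :: "'a set \<Rightarrow> 'a \<times> 'a" where "p e = (let x = SOME x. x \<in> e in (x, other_end e x))" for e
  have p: "{fst (p e), snd (p e)} = e \<and> fst (p e) \<noteq> snd (p e)" if "e \<in> E" for e
  proof -
    have "\<exists>x. x \<in> e" using two[OF that] by (auto simp: card_2_iff)
    then have "(SOME x. x \<in> e) \<in> e" by (rule someI_ex)
    from other_end[OF two[OF that] this] show ?thesis by (simp add: p_def Let_def)
  qed
  obtain q where q_swap: "\<forall>e\<in>F. q e = p e \<or> q e = prod.swap (p e)"
    and q_flow: "\<forall>x. \<bar>\<Sum>e\<in>F. flow (q e) x\<bar> \<le> 1"
    using balanced_orientation_finite[OF \<open>finite F\<close>] by blast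
  have q: "{fst (q e), snd (q e)} = e \<and> fst (q e) \<noteq> snd (q e)" if "e \<in> F" for e
  proof -
    have "e \<in> E" "q e = p e \<or> q e = prod.swap (p e)" using that q_swap \<open>F \<subseteq> E\<close> by auto
    with p[OF \<open>e \<in> E\<close>] show ?thesis by (cases "p e") auto
  qed
  define t where "t e = fst (if e \<in> F then q e else p e)" for e
  have "\<forall>e\<in>E. t e \<in> e" using p q by (auto simp: t_def)
  moreover have "\<bar>int (card (out_edges E t v)) - int (card (in_edges E t v))\<bar> \<le> 1"
    if "incident E v \<subseteq> F" for v
    using card_out_edges_minus_in_edges[OF \<open>finite F\<close> \<open>F \<subseteq> E\<close> that q] q_flow
    by (simp add: t_def)
  ultimately show ?thesis by blast
qed

theorem balanced_orientation_exists:
  fixes E :: "'a set set"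
  assumes two: "\<And>e. e \<in> E \<Longrightarrow> card e = 2"
  shows "\<exists>t. (\<forall>e\<in>E. t e \<in> e) \<and> balanced E t"
proof -
  let ?discrepancy = "\<lambda>v t. \<bar>int (card (out_edges E t v)) - int (card (in_edges E t v))\<bar>"
  have "\<exists>t. (\<forall>e\<in>E. t e \<in> e) \<and> (\<forall>v\<in>{v. finite (incident E v)}. ?discrepancy v t \<le> 1)"
  proof (rule compactness_finite_domains[where vars = "incident E"])
    show "finite e" if "e \<in> E" for e
      using two[OF that] by (intro card_ge_0_finite) simp
    show "finite (incident E v) \<and> incident E v \<subseteq> E" if "v \<in> {v. finite (incident E v)}" for v
      using that by (auto simp: incident_def)
    show "?discrepancy v t \<le> 1 \<longleftrightarrow> ?discrepancy v t' \<le> 1"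
      if "\<And>e. e \<in> incident E v \<Longrightarrow> t e = t' e" for v t t'
      using that by (simp add: out_edges_def in_edges_def cong: conj_cong)
  next
    fix C assume C: "C \<subseteq> {v. finite (incident E v)}" "finite C"
    have "finite (\<Union>v\<in>C. incident E v)" "(\<Union>v\<in>C. incident E v) \<subseteq> E"
      using C by (auto simp: incident_def)
    from balanced_orientation_finite_subset[OF two this]
    show "\<exists>t. (\<forall>e\<in>E. t e \<in> e) \<and> (\<forall>v\<in>C. ?discrepancy v t \<le> 1)"
      by blast
  qed
  then show ?thesis by (auto simp: balanced_def)
qed

lemma balanced_card_out_in_edges_ge_2:
  assumes "balanced E t" "finite (incident E v)" "4 \<le> card (incident E v)"
  shows "2 \<le> card (out_edges E t v)" "2 \<le> card (in_edges E t v)"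
proof -
  have "incident E v = out_edges E t v \<union> in_edges E t v" "out_edges E t v \<inter> in_edges E t v = {}"
    by (auto simp: out_edges_def in_edges_def)
  then have "card (incident E v) = card (out_edges E t v) + card (in_edges E t v)"
    using assms(2) by (simp add: card_Un_disjoint)
  moreover have "\<bar>int (card (out_edges E t v)) - int (card (in_edges E t v))\<bar> \<le> 1"
    using assms(1,2) by (simp add: balanced_def)
  ultimately show "2 \<le> card (out_edges E t v)" "2 \<le> card (in_edges E t v)"
    using assms(3) by linarith+
qed

section \<open>Partitions into small blocks\<close>

definition block_partition :: "'e set \<Rightarrow> ('e \<Rightarrow> 'e set) \<Rightarrow> bool" where
  "block_partition A blk \<longleftrightarrow> (\<forall>x\<in>A. x \<in> blk x \<and> blk x \<subseteq> A \<and> (\<forall>y\<in>blk x. blk y = blk x) \<and>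
     finite (blk x) \<and> card (blk x) \<le> 3)"

lemma block_partitionI:
  assumes "\<And>x. x \<in> A \<Longrightarrow> x \<in> blk x" "\<And>x. x \<in> A \<Longrightarrow> blk x \<subseteq> A"
    "\<And>x y. x \<in> A \<Longrightarrow> y \<in> blk x \<Longrightarrow> blk y = blk x"
    "\<And>x. x \<in> A \<Longrightarrow> finite (blk x)" "\<And>x. x \<in> A \<Longrightarrow> card (blk x) \<le> 3"
  shows "block_partition A blk"
  using assms unfolding block_partition_def by blast

lemma block_partitionD:
  assumes "block_partition A blk" "x \<in> A"
  shows "x \<in> blk x" "blk x \<subseteq> A" "\<And>y. y \<in> blk x \<Longrightarrow> blk y = blk x"
    "finite (blk x)" "card (blk x) \<le> 3"
  using assms unfolding block_partition_def by blast+

lemma block_partition_Un: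
  assumes A: "block_partition A bA" and B: "block_partition B bB" and "A \<inter> B = {}"
  shows "block_partition (A \<union> B) (\<lambda>x. if x \<in> A then bA x else bB x)" (is "block_partition _ ?b")
  unfolding block_partition_def
proof
  fix x assume "x \<in> A \<union> B"
  then consider "x \<in> A" | "x \<in> B" "x \<notin> A" by blast
  then show "x \<in> ?b x \<and> ?b x \<subseteq> A \<union> B \<and> (\<forall>y\<in>?b x. ?b y = ?b x) \<and> finite (?b x) \<and> card (?b x) \<le> 3"
  proof cases
    case 1
    note P = block_partitionD[OF A 1]
    have "?b y = bA x" if "y \<in> bA x" for y
      using P(2) P(3)[OF that] that by auto
    with P(1,2,4,5) 1 show ?thesis by auto
  next
    case 2
    note P = block_partitionD[OF B 2(1)]
    have "?b y = bB x" if "y \<in> bB x" for y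
      using P(2) P(3)[OF that] that \<open>A \<inter> B = {}\<close> by auto
    with P(1,2,4,5) 2 show ?thesis by auto
  qed
qed


lemma block_partition_fiber:
  assumes "block_partition A blk"
  shows "finite {x\<in>A. blk x = S}" "card {x\<in>A. blk x = S} \<le> 3"
proof -
  have "finite {x\<in>A. blk x = S} \<and> card {x\<in>A. blk x = S} \<le> 3"
  proof (cases "\<exists>x\<in>A. blk x = S")
    case True
    then obtain x where x: "x \<in> A" "blk x = S" by auto
    note P = block_partitionD[OF assms x(1)]
    have "{x\<in>A. blk x = S} = blk x"
    proof (intro set_eqI iffI)
      fix y assume "y \<in> {x\<in>A. blk x = S}"
      then show "y \<in> blk x" using block_partitionD(1)[OF assms] x(2) by auto
    next
      fix y assume "y \<in> blk x"
      then show "y \<in> {x\<in>A. blk x = S}" using P(2) P(3)[of y] x(2) by auto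
    qed
    then show ?thesis using P(4,5) by simp
  next
    case False
    then have empty: "{x\<in>A. blk x = S} = {}" by auto
    show ?thesis unfolding empty by simp
  qed
  then show "finite {x\<in>A. blk x = S}" "card {x\<in>A. blk x = S} \<le> 3" by blast+
qed

lemma block_partition_finite:
  assumes "finite A"
  shows "\<exists>blk. block_partition A blk \<and> (\<forall>x\<in>A. blk x = {x} \<longrightarrow> A = {x})"
  using assms
proof (induction "card A" arbitrary: A rule: less_induct)
  case less
  show ?case
  proof (cases "card A \<le> 3")
    case True
    then have "block_partition A (\<lambda>_. A)"
      using less.prems by (simp add: block_partition_def)
    then show ?thesis by blast
  next
    case False
    then have "\<not> card A \<le> Suc 0" by simp
    then obtain x y where xy: "x \<in> A" "y \<in> A" "x \<noteq> y"
      using card_le_Suc0_iff_eq[OF less.prems] by blast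
    define A' where "A' = A - {x, y}"
    have A': "card A' < card A" "finite A'" "card A' \<ge> 2"
      using xy False less.prems by (auto simp: A'_def card_Diff_subset)
    obtain blk' where blk': "block_partition A' blk'" and "\<forall>z\<in>A'. blk' z = {z} \<longrightarrow> A' = {z}"
      using less.hyps[OF A'(1,2)] by blast
    then have no_singleton: "\<forall>z\<in>A'. blk' z \<noteq> {z}"
      using A'(3) by auto
    have "block_partition {x, y} (\<lambda>_. {x, y})" by (simp add: block_partition_def card_insert_if)
    from block_partition_Un[OF this blk'] have "block_partition A (\<lambda>z. if z \<in> {x, y} then {x, y} else blk' z)"
      using xy by (simp add: A'_def insert_absorb Un_absorb1)
    moreover have "\<forall>z\<in>A. (if z \<in> {x, y} then {x, y} else blk' z) \<noteq> {z}"
      using xy no_singleton by (auto simp: A'_def doubleton_eq_iff)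
    ultimately show ?thesis by blast
  qed
qed

lemma infinite_times_bool_eqpoll:
  assumes "infinite A"
  shows "A \<times> (UNIV :: bool set) \<approx> A"
proof -
  have "(UNIV :: bool set) \<lesssim> A" using assms by (simp add: finite_lepoll_infinite)
  then have "ordLeq3 (card_of (UNIV :: bool set)) (card_of A)"
    by (simp add: lepoll_def card_of_ordLeq[symmetric])
  from card_of_Times_infinite[OF assms _ this] show ?thesis
    by (simp add: eqpoll_iff_card_of_ordIso)
qed

lemma block_partition_infinite:
  assumes "infinite A"
  shows "\<exists>blk. block_partition A blk \<and> (\<forall>x\<in>A. card (blk x) = 2)"
proof -
  obtain f g where f: "\<forall>x\<in>A. f x \<in> A \<times> UNIV \<and> g (f x) = x"
    and g: "\<forall>z\<in>A \<times> (UNIV :: bool set). g z \<in> A \<and> f (g z) = z"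
    using eqpoll_sym[OF infinite_times_bool_eqpoll[OF assms]] unfolding eqpoll_iff_bijections by auto
  define blk where "blk x = {g (fst (f x), False), g (fst (f x), True)}" for x
  have blk: "x \<in> blk x" "blk x \<subseteq> A" "card (blk x) = 2" if "x \<in> A" for x
  proof -
    have "fst (f x) \<in> A" using f that by auto
    then have g_in: "g (fst (f x), b) \<in> A" and f_g: "f (g (fst (f x), b)) = (fst (f x), b)" for b
      using g by auto
    then show "blk x \<subseteq> A" by (simp add: blk_def)
    have "g (fst (f x), False) \<noteq> g (fst (f x), True)"
      using f_g[of False] f_g[of True] by (metis Pair_inject)
    then show "card (blk x) = 2" by (simp add: blk_def)
    have "x = g (fst (f x), snd (f x))" using f that by simp
    then show "x \<in> blk x" by (cases "snd (f x)") (auto simp: blk_def)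
  qed
  have same_blk: "blk y = blk x" if "x \<in> A" "y \<in> blk x" for x y
  proof -
    have "fst (f x) \<in> A" using f that(1) by auto
    then have "fst (f y) = fst (f x)" using g that(2) by (auto simp: blk_def)
    then show ?thesis by (simp add: blk_def)
  qed
  have "block_partition A blk"
  proof (rule block_partitionI)
    show "x \<in> blk x" "blk x \<subseteq> A" "card (blk x) \<le> 3" if "x \<in> A" for x
      using blk[OF that] by simp_all
    show "blk y = blk x" if "x \<in> A" "y \<in> blk x" for x y
      using same_blk[OF that] .
    show "finite (blk x)" for x
      by (simp add: blk_def)
  qed
  then show ?thesis using blk(3) by blast
qed

lemma block_partition_exists: "\<exists>blk. block_partition A blk \<and> (\<forall>x\<in>A. blk x = {x} \<longrightarrow> A = {x})"
proof (cases "finite A")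
  case False
  then obtain blk where blk: "block_partition A blk" "\<forall>x\<in>A. card (blk x) = 2"
    using block_partition_infinite by blast
  show ?thesis
  proof (intro exI conjI)
    show "block_partition A blk" by (fact blk(1))
    show "\<forall>x\<in>A. blk x = {x} \<longrightarrow> A = {x}" using blk(2) by auto
  qed
qed (rule block_partition_finite)

lemma block_partitions_exist:
  "\<exists>blk. \<forall>v. block_partition (A v) (blk v) \<and> (\<forall>x\<in>A v. blk v x = {x} \<longrightarrow> A v = {x})"
proof -
  have "\<forall>v. \<exists>b. block_partition (A v) b \<and> (\<forall>x\<in>A v. b x = {x} \<longrightarrow> A v = {x})"
    using block_partition_exists by blast
  from choice[OF this] show ?thesis .
qed

section \<open>Majority colourings from rainbow blocks\<close>

lemma lepoll_Diff_finite:
  assumes "infinite A" "finite S"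
  shows "A \<lesssim> A - S"
proof -
  have "(A - S) \<union> T \<approx> A - S" if "finite T" for T
    using that
  proof (induction T rule: finite_induct)
    case (insert a T)
    have "(A - S) \<union> insert a T = insert a ((A - S) \<union> T)" by auto
    also have "\<dots> \<approx> (A - S) \<union> T" using assms by (intro infinite_insert_eqpoll) simp
    finally show ?case using insert.IH eqpoll_trans by blast
  qed simp
  from this[of "A \<inter> S"] have "A \<approx> A - S" using assms(2) by (simp add: Un_Diff_Int)
  then show ?thesis by (rule eqpoll_imp_lepoll)
qed

lemma lepoll_if_lepoll_Diff_finite:
  assumes "X - S \<lesssim> Y" "finite S" "finite X \<Longrightarrow> finite Y \<Longrightarrow> X \<inter> S = {}"
  shows "X \<lesssim> Y"
proof (cases "finite X")
  case True
  show ?thesis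
  proof (cases "finite Y")
    case True
    with \<open>finite X\<close> assms(1,3) show ?thesis by (simp add: Diff_triv)
  qed (use \<open>finite X\<close> finite_lepoll_infinite in blast)
next
  case False
  then have "X \<lesssim> X - S" using assms(2) by (rule lepoll_Diff_finite)
  then show ?thesis using assms(1) by (rule lepoll_trans)
qed

text \<open>In a rainbow block the partner of an element has a different colour, and distinct elements of
  the same colour lie in distinct blocks, so they have distinct partners.\<close>

lemma rainbow_blocks_partner_lepoll:
  assumes blk: "block_partition A blk" and rainbow: "\<forall>x\<in>A. inj_on c (blk x)"
  shows "{x\<in>A. c x = \<alpha>} - {x\<in>A. blk x = {x}} \<lesssim> {x\<in>A. c x \<noteq> \<alpha>}"
proof -
  define partner where "partner x = (SOME y. y \<in> blk x \<and> y \<noteq> x)" for x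
  have partner: "partner x \<in> blk x" "partner x \<noteq> x" if "x \<in> A" "blk x \<noteq> {x}" for x
  proof -
    have "\<exists>y. y \<in> blk x \<and> y \<noteq> x"
      using block_partitionD(1)[OF blk that(1)] that(2) by blast
    from someI_ex[OF this] show "partner x \<in> blk x" "partner x \<noteq> x"
      unfolding partner_def by blast+
  qed
  have "inj_on partner ({x\<in>A. c x = \<alpha>} - {x\<in>A. blk x = {x}})"
  proof (rule inj_onI)
    fix x x' assume "x \<in> {x\<in>A. c x = \<alpha>} - {x\<in>A. blk x = {x}}"
      and "x' \<in> {x\<in>A. c x = \<alpha>} - {x\<in>A. blk x = {x}}" and eq: "partner x = partner x'"
    then have x: "x \<in> A" "c x = \<alpha>" "blk x \<noteq> {x}" and x': "x' \<in> A" "c x' = \<alpha>" "blk x' \<noteq> {x'}"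
      by auto
    have "blk x' = blk x"
      using block_partitionD(3)[OF blk x(1) partner(1)[OF x(1,3)]]
        block_partitionD(3)[OF blk x'(1) partner(1)[OF x'(1,3)]] eq by simp
    then have "x' \<in> blk x" using block_partitionD(1)[OF blk x'(1)] by simp
    with inj_onD[OF bspec[OF rainbow x(1)]] block_partitionD(1)[OF blk x(1)]
    show "x = x'" using x(2) x'(2) by simp
  qed
  moreover have "partner ` ({x\<in>A. c x = \<alpha>} - {x\<in>A. blk x = {x}}) \<subseteq> {x\<in>A. c x \<noteq> \<alpha>}"
  proof (rule image_subsetI)
    fix x assume "x \<in> {x\<in>A. c x = \<alpha>} - {x\<in>A. blk x = {x}}"
    then have x: "x \<in> A" "c x = \<alpha>" "blk x \<noteq> {x}" by auto
    have "partner x \<in> A" using partner[OF x(1,3)] block_partitionD(2)[OF blk x(1)] by blast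
    moreover have "c (partner x) \<noteq> c x"
      using inj_onD[OF bspec[OF rainbow x(1)]] partner[OF x(1,3)] block_partitionD(1)[OF blk x(1)]
      by metis
    ultimately show "partner x \<in> {x\<in>A. c x \<noteq> \<alpha>}" using x(2) by simp
  qed
  ultimately show ?thesis unfolding lepoll_def by blast
qed

theorem rainbow_blocks_majority:
  assumes "block_partition A blk" "\<forall>x\<in>A. inj_on c (blk x)"
    and "finite {x\<in>A. blk x = {x}}" and "finite A \<Longrightarrow> \<forall>x\<in>A. blk x \<noteq> {x}"
  shows "{x\<in>A. c x = \<alpha>} \<lesssim> {x\<in>A. c x \<noteq> \<alpha>}"
proof (rule lepoll_if_lepoll_Diff_finite)
  show "{x\<in>A. c x = \<alpha>} - {x\<in>A. blk x = {x}} \<lesssim> {x\<in>A. c x \<noteq> \<alpha>}"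
    using assms(1,2) by (rule rainbow_blocks_partner_lepoll)
  show "{x\<in>A. c x = \<alpha>} \<inter> {x\<in>A. blk x = {x}} = {}"
    if "finite {x\<in>A. c x = \<alpha>}" "finite {x\<in>A. c x \<noteq> \<alpha>}"
  proof -
    have "A \<subseteq> {x\<in>A. c x = \<alpha>} \<union> {x\<in>A. c x \<noteq> \<alpha>}" by blast
    from finite_subset[OF this finite_UnI[OF that]] have "finite A" .
    then show ?thesis using assms(4) by auto
  qed
qed (use assms(3) in simp)


section \<open>Majority 3-edge-colourings\<close>

lemma rainbow_block:
  assumes "block_partition A blk" "x \<in> A" "A \<subseteq> F" "proper_edge_coloring F l r c"
    and "\<And>y z. y \<in> A \<Longrightarrow> z \<in> A \<Longrightarrow> blk y = blk z \<Longrightarrow> l y = l z \<or> r y = r z"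
  shows "inj_on c (blk x)"
proof (rule inj_onI)
  fix y z assume yz: "y \<in> blk x" "z \<in> blk x" "c y = c z"
  have "y \<in> A" "z \<in> A" using block_partitionD(2)[OF assms(1,2)] yz(1,2) by blast+
  moreover have "blk y = blk z"
    using block_partitionD(3)[OF assms(1,2) yz(1)] block_partitionD(3)[OF assms(1,2) yz(2)] by simp
  ultimately show "y = z"
    using assms(3-5) yz(3) unfolding proper_edge_coloring_def by blast
qed

text \<open>The out-blocks and the in-blocks at all vertices are the left and the right vertices of
  a bipartite multigraph of maximum degree 3, in which every edge joins its out-block to its
  in-block. A proper 3-edge-colouring of it makes all blocks rainbow.\<close>

lemma rainbow_block_coloring:
  fixes E :: "'a set set" and t :: "'a set \<Rightarrow> 'a"
  assumes two: "\<And>e. e \<in> E \<Longrightarrow> card e = 2" and tail: "\<And>e. e \<in> E \<Longrightarrow> t e \<in> e"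
    and bo: "\<And>v. block_partition (out_edges E t v) (bo v)"
    and bi: "\<And>v. block_partition (in_edges E t v) (bi v)"
  shows "\<exists>c :: 'a set \<Rightarrow> nat. (\<forall>e\<in>E. c e < 3) \<and>
    (\<forall>v. \<forall>e\<in>out_edges E t v. inj_on c (bo v e)) \<and> (\<forall>v. \<forall>e\<in>in_edges E t v. inj_on c (bi v e))"
proof -
  define h where "h e = other_end e (t e)" for e
  have out_iff: "e \<in> out_edges E t v \<longleftrightarrow> e \<in> E \<and> t e = v" for e v
    using tail by (auto simp: out_edges_def incident_def)
  have in_iff: "e \<in> in_edges E t v \<longleftrightarrow> e \<in> E \<and> h e = v" for e v
  proof (cases "e \<in> E")
    case True
    note h = other_end[OF two[OF True] tail[OF True], folded h_def]
    have "v \<in> e \<longleftrightarrow> v = t e \<or> v = h e" using h(1) by blast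
    then have "v \<in> e \<and> t e \<noteq> v \<longleftrightarrow> h e = v" using h(2) by auto
    then show ?thesis using True by (simp add: in_edges_def incident_def)
  qed (simp add: in_edges_def incident_def)
  define L where "L e = (t e, bo (t e) e)" for e
  define R where "R e = (h e, bi (h e) e)" for e
  have "finite {f\<in>E. L f = z} \<and> card {f\<in>E. L f = z} \<le> 3" for z
  proof -
    obtain v B where z: "z = (v, B)" by fastforce
    have "{f\<in>E. L f = z} = {f\<in>out_edges E t v. bo v f = B}"
      by (auto simp: z L_def out_iff)
    then show ?thesis using block_partition_fiber[OF bo] by simp
  qed
  moreover have "finite {f\<in>E. R f = z} \<and> card {f\<in>E. R f = z} \<le> 3" for z
  proof -
    obtain v B where z: "z = (v, B)" by fastforce
    have "{f\<in>E. R f = z} = {f\<in>in_edges E t v. bi v f = B}"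
      by (auto simp: z R_def in_iff)
    then show ?thesis using block_partition_fiber[OF bi] by simp
  qed
  ultimately obtain c :: "'a set \<Rightarrow> nat" where c: "\<forall>e\<in>E. c e < 3" "proper_edge_coloring E L R c"
    using bipartite_edge_coloring[of E L 3 R] by blast
  have "inj_on c (bo v e)" if "e \<in> out_edges E t v" for v e
    by (rule rainbow_block[OF bo that _ c(2)]) (auto simp: out_iff L_def)
  moreover have "inj_on c (bi v e)" if "e \<in> in_edges E t v" for v e
    by (rule rainbow_block[OF bi that _ c(2)]) (auto simp: in_iff R_def)
  ultimately show ?thesis using c(1) by blast
qed

lemma majority_at_vertex:
  assumes bo: "block_partition (out_edges E t v) bo" "\<forall>e\<in>out_edges E t v. bo e = {e} \<longrightarrow> out_edges E t v = {e}"
    and bi: "block_partition (in_edges E t v) bi" "\<forall>e\<in>in_edges E t v. bi e = {e} \<longrightarrow> in_edges E t v = {e}"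
    and rainbow: "\<forall>e\<in>out_edges E t v. inj_on c (bo e)" "\<forall>e\<in>in_edges E t v. inj_on c (bi e)"
    and "balanced E t" and degree: "finite (incident E v) \<Longrightarrow> 4 \<le> card (incident E v)"
  shows "{e\<in>incident E v. c e = \<alpha>} \<lesssim> {e\<in>incident E v. c e \<noteq> \<alpha>}"
proof -
  let ?Out = "out_edges E t v" and ?In = "in_edges E t v"
  define blk where "blk e = (if e \<in> ?Out then bo e else bi e)" for e
  have incident: "incident E v = ?Out \<union> ?In" "?Out \<inter> ?In = {}"
    by (auto simp: out_edges_def in_edges_def)
  have "block_partition (incident E v) blk"
    unfolding incident(1) blk_def using bo(1) bi(1) incident(2) by (rule block_partition_Un)
  moreover have "\<forall>e\<in>incident E v. inj_on c (blk e)"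
    using rainbow by (auto simp: incident(1) blk_def)
  moreover have singletons: "{e\<in>incident E v. blk e = {e}} \<subseteq>
      (if card ?Out = 1 then ?Out else {}) \<union> (if card ?In = 1 then ?In else {})"
    using bo(2) bi(2) by (auto simp: incident(1) blk_def)
  then have "finite {e\<in>incident E v. blk e = {e}}"
    by (rule finite_subset) (auto intro: card_ge_0_finite)
  moreover have "\<forall>e\<in>incident E v. blk e \<noteq> {e}" if "finite (incident E v)"
    using singletons balanced_card_out_in_edges_ge_2[OF \<open>balanced E t\<close> that degree[OF that]] by auto
  ultimately show ?thesis by (rule rainbow_blocks_majority)
qed

lemma majority_3_edge_coloring_Suc:
  assumes "\<forall>e\<in>E. c e < 3"
    and "\<And>v \<alpha>. v \<in> V \<Longrightarrow> {e\<in>incident E v. c e = \<alpha>} \<lesssim> {e\<in>incident E v. c e \<noteq> \<alpha>}"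
  shows "majority_3_edge_coloring V E (\<lambda>e. Suc (c e))"
  unfolding majority_3_edge_coloring_def
proof (intro conjI ballI)
  show "Suc (c e) \<in> {1, 2, 3}" if "e \<in> E" for e
    using assms(1) that by (auto simp: less_Suc_eq)
  fix v \<alpha> assume "v \<in> V" "\<alpha> \<in> {1, 2, 3::nat}"
  then have "Suc (c e) = \<alpha> \<longleftrightarrow> c e = \<alpha> - 1" for e by auto
  then show "{e\<in>incident E v. Suc (c e) = \<alpha>} \<lesssim> {e\<in>incident E v. Suc (c e) \<noteq> \<alpha>}"
    using assms(2)[OF \<open>v \<in> V\<close>] by simp
qed

theorem mainTheorem7:
  fixes V :: "'a set" and E :: "'a set set"
  assumes "graph V E"
    and "infinite V"
    and "min_degree_ge V E 4"
  shows "\<exists>c. majority_3_edge_coloring V E c"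
proof -
  \<comment> \<open>The argument does not use that \<open>V\<close> is infinite.\<close>
  have two: "\<And>e. e \<in> E \<Longrightarrow> card e = 2" using assms(1) by (simp add: graph_def)
  obtain t where tail: "\<forall>e\<in>E. t e \<in> e" and bal: "balanced E t"
    using balanced_orientation_exists[OF two] by blast
  from block_partitions_exist[of "out_edges E t"]
  obtain bo where bo: "\<forall>v. block_partition (out_edges E t v) (bo v) \<and>
      (\<forall>e\<in>out_edges E t v. bo v e = {e} \<longrightarrow> out_edges E t v = {e})" ..
  from block_partitions_exist[of "in_edges E t"]
  obtain bi where bi: "\<forall>v. block_partition (in_edges E t v) (bi v) \<and>
      (\<forall>e\<in>in_edges E t v. bi v e = {e} \<longrightarrow> in_edges E t v = {e})" ..
  note bo_part = conjunct1[OF spec[OF bo]] and bi_part = conjunct1[OF spec[OF bi]]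
  from rainbow_block_coloring[OF two bspec[OF tail] bo_part bi_part]
  obtain c :: "'a set \<Rightarrow> nat" where c: "\<forall>e\<in>E. c e < 3"
      "\<forall>v. \<forall>e\<in>out_edges E t v. inj_on c (bo v e)" "\<forall>v. \<forall>e\<in>in_edges E t v. inj_on c (bi v e)"
    by blast
  have "{e\<in>incident E v. c e = \<alpha>} \<lesssim> {e\<in>incident E v. c e \<noteq> \<alpha>}" if "v \<in> V" for v \<alpha>
  proof (rule majority_at_vertex[OF bo_part conjunct2[OF spec[OF bo]] bi_part conjunct2[OF spec[OF bi]]
        spec[OF c(2)] spec[OF c(3)] bal])
    have "{..<4::nat} \<lesssim> incident E v" using assms(3) \<open>v \<in> V\<close> by (simp add: min_degree_ge_def)
    then show "4 \<le> card (incident E v)" if "finite (incident E v)"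
      using that by (simp add: lepoll_iff_card_le)
  qed
  from majority_3_edge_coloring_Suc[OF c(1) this] show ?thesis by blast
qed

end
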